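(* Under the standing assumptions, suppose $\varphi$ is lower semicontinuous on $X$. Let $\rho_k\to\infty$ and $\sigma_k\to0$ with $\rho_k,\sigma_k>0$, and let $x_k\in\arg\min_{x\in X}\varphi_{\rho_k,\sigma_k}(x)$ for each $k$. Then every accumulation point $\bar x$ of $\{x_k\}$ satisfies $\bar x\in\arg\min_{x\in X}\varphi(x)$. Moreover, if $x_{k_j}\to\bar x$ along a subsequence, then every accumulation point $\bar y$ of $\{y^*_{\rho_{k_j},\sigma_{k_j}}(x_{k_j})\}$ belongs to $\arg\max\{f(\bar x,y): y\in Y,\ c(\bar x,y)\le 0\}$.
   Context: Standing assumptions: $X\subset\mathbb{R}^n$ and $Y\subset\mathbb{R}^m$ are nonempty, convex and compact. $f:X\times Y\to\mathbb{R}$ is continuously differentiable with Lipschitz continuous gradient on $X\times Y$, $f(x,\cdot)$ concave on $Y$. $c=(c_1,\dots,c_p)$ has continuously differentiable components with Lipschitz gradients, each $c_i(x,\cdot)$ convex on $Y$. For every $x\in X$, $\Theta(x):=\{y\in Y: c(x,y)\le 0\}\neq\emptyset$. Notation: $[z]_+=\max\{z,0\}$ componentwise; $\varphi(x):=\max\{f(x,y): y\in\Theta(x)\}$; $\psi_{\rho,\sigma}(x,y):=f(x,y)-\frac{\rho}{2}\|[c(x,y)]_+\|^2-\frac{\sigma}{2}\|y\|^2$; $\varphi_{\rho,\sigma}(x):=\max_{y\in Y}\psi_{\rho,\sigma}(x,y)$; $y^*_{\rho,\sigma}(x)$ is the unique maximizer of $\psi_{\rho,\sigma}(x,\cdot)$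 over $Y$. *)

theory Defs
  imports "HOL-Analysis.Analysis"
begin

definition C11_on :: "('a::euclidean_space \<Rightarrow> real) \<Rightarrow> 'a set \<Rightarrow> bool" where
  "C11_on g S \<longleftrightarrow>
     (\<exists>U (g' :: 'a \<Rightarrow> 'a \<Rightarrow>\<^sub>L real). open U \<and> S \<subseteq> U \<and>
        (\<forall>z\<in>U. (g has_derivative blinfun_apply (g' z)) (at z)) \<and>
        continuous_on U g' \<and>
        (\<exists>L. \<forall>z\<in>S. \<forall>w\<in>S. norm (g' z - g' w) \<le> L * dist z w))"

definition lsc_on :: "'a::topological_space set \<Rightarrow> ('a \<Rightarrow> real) \<Rightarrow> bool" where
  "lsc_on X g \<longleftrightarrow> (\<forall>x\<in>X. \<forall>t < g x. eventually (\<lambda>z. t < g z) (at x within X))"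

definition Theta :: "'y set \<Rightarrow> ('x \<Rightarrow> 'y \<Rightarrow> real^'p) \<Rightarrow> 'x \<Rightarrow> 'y set" where
  "Theta Y c x = {y \<in> Y. \<forall>i. c x y $ i \<le> 0}"

definition phi :: "'y set \<Rightarrow> ('x \<Rightarrow> 'y \<Rightarrow> real) \<Rightarrow> ('x \<Rightarrow> 'y \<Rightarrow> real^'p) \<Rightarrow> 'x \<Rightarrow> real" where
  "phi Y f c x = Sup (f x ` Theta Y c x)"

definition psi :: "('x \<Rightarrow> 'y::real_normed_vector \<Rightarrow> real) \<Rightarrow> ('x \<Rightarrow> 'y \<Rightarrow> real^'p)
                   \<Rightarrow> real \<Rightarrow> real \<Rightarrow> 'x \<Rightarrow> 'y \<Rightarrow> real" where
  "psi f c \<rho> \<sigma> x y = f x y - \<rho> / 2 * (norm (\<chi> i. max (c x y $ i) 0))\<^sup>2 - \<sigma> / 2 * (norm y)\<^sup>2"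

definition phi_pen :: "'y::real_normed_vector set \<Rightarrow> ('x \<Rightarrow> 'y \<Rightarrow> real) \<Rightarrow> ('x \<Rightarrow> 'y \<Rightarrow> real^'p)
                   \<Rightarrow> real \<Rightarrow> real \<Rightarrow> 'x \<Rightarrow> real" where
  "phi_pen Y f c \<rho> \<sigma> x = Sup (psi f c \<rho> \<sigma> x ` Y)"

definition ystar :: "'y::real_normed_vector set \<Rightarrow> ('x \<Rightarrow> 'y \<Rightarrow> real) \<Rightarrow> ('x \<Rightarrow> 'y \<Rightarrow> real^'p)
                   \<Rightarrow> real \<Rightarrow> real \<Rightarrow> 'x \<Rightarrow> 'y" where
  "ystar Y f c \<rho> \<sigma> x = (THE y. y \<in> Y \<and> (\<forall>y'\<in>Y. psi f c \<rho> \<sigma> x y' \<le> psi f c \<rho> \<sigma> x y))"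

end

theory Submission
  imports Defs
begin

(* For fixed x, the penalized value phi_pen(x) = max_Y psi(x, .) is squeezed around phi(x):
   feasible points carry no penalty, so phi(x) <= phi_pen(x) + sigma/2 max_Y |y|^2, while
   points with f(x,y) >= phi(x) + eps form a compact set of infeasible points on which the
   penalty is bounded below, so once rho is large phi_pen(x) <= phi(x) + eps.  Hence the
   minimizers x_k satisfy phi(x_k) <= phi(x') + o(1) for every x', and lower semicontinuity
   carries this to any limit point.  For the inner variable, rho_k |[c(x_k,y_k)]_+|^2 stays
   bounded, so limits of y_k are feasible, and phi(x_k) <= f(x_k,y_k) + o(1) together with
   lower semicontinuity gives phi(xbar) <= f(xbar,ybar). *)

definition penalty :: "real^'p \<Rightarrow> real" where
  "penalty v = (norm (\<chi> i. max (v $ i) 0))\<^sup>2"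

lemma penalty_eq_sum: "penalty v = (\<Sum>i\<in>UNIV. (max (v $ i) 0)\<^sup>2)"
  unfolding penalty_def power2_norm_eq_inner by (simp add: inner_vec_def power2_eq_square)

lemma penalty_nonneg: "0 \<le> penalty v"
  by (simp add: penalty_def)

lemma penalty_eq_0_iff: "penalty v = 0 \<longleftrightarrow> (\<forall>i. v $ i \<le> 0)"
  by (auto simp: penalty_def vec_eq_iff max_def)

lemma continuous_on_penalty:
  "continuous_on S g \<Longrightarrow> continuous_on S (\<lambda>y. penalty (g y))"
  unfolding penalty_eq_sum by (intro continuous_intros)

lemma convex_on_penalty:
  fixes g :: "'a::real_vector \<Rightarrow> real^'p"
  assumes "\<And>i. convex_on S (\<lambda>y. g y $ i)"
  shows "convex_on S (\<lambda>y. penalty (g y))"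
proof (rule convex_onI)
  show "convex S" using assms convex_on_imp_convex by blast
  fix t :: real and y z assume t: "0 < t" "t < 1" and yz: "y \<in> S" "z \<in> S"
  let ?a = "\<lambda>i. max (g y $ i) 0" and ?b = "\<lambda>i. max (g z $ i) 0"
  have "max (g ((1 - t) *\<^sub>R y + t *\<^sub>R z) $ i) 0 \<le> (1 - t) * ?a i + t * ?b i" for i
    using convex_onD[OF assms, of t y z i] t yz
    by (smt (verit) mult_left_mono mult_nonneg_nonneg)
  then have "(max (g ((1 - t) *\<^sub>R y + t *\<^sub>R z) $ i) 0)\<^sup>2 \<le> ((1 - t) * ?a i + t * ?b i)\<^sup>2" for i
    by (intro power_mono) auto
  also have "((1 - t) * ?a i + t * ?b i)\<^sup>2 \<le> (1 - t) * (?a i)\<^sup>2 + t * (?b i)\<^sup>2" for i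
  proof -
    have "0 \<le> t * (1 - t) * (?a i - ?b i)\<^sup>2" using t by simp
    then show ?thesis by (simp add: power2_eq_square algebra_simps)
  qed
  finally have "(max (g ((1 - t) *\<^sub>R y + t *\<^sub>R z) $ i) 0)\<^sup>2 \<le> (1 - t) * (?a i)\<^sup>2 + t * (?b i)\<^sup>2" for i .
  then have "penalty (g ((1 - t) *\<^sub>R y + t *\<^sub>R z)) \<le> (\<Sum>i\<in>UNIV. (1 - t) * (?a i)\<^sup>2 + t * (?b i)\<^sup>2)"
    unfolding penalty_eq_sum by (rule sum_mono)
  then show "penalty (g ((1 - t) *\<^sub>R y + t *\<^sub>R z)) \<le> (1 - t) * penalty (g y) + t * penalty (g z)"
    by (simp add: penalty_eq_sum sum.distrib sum_distrib_left)
qed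

lemma psi_eq_penalty:
  "psi f c \<rho> \<sigma> x y = f x y - \<rho> / 2 * penalty (c x y) - \<sigma> / 2 * (norm y)\<^sup>2"
  by (simp add: psi_def penalty_def)

lemma psi_le_f_minus_penalty:
  assumes "0 \<le> \<rho>" "0 \<le> \<sigma>"
  shows "psi f c \<rho> \<sigma> x y \<le> f x y - \<rho> / 2 * penalty (c x y)"
  using assms by (simp add: psi_eq_penalty)

lemma psi_feasible:
  assumes "y \<in> Theta Y c x"
  shows "psi f c \<rho> \<sigma> x y = f x y - \<sigma> / 2 * (norm y)\<^sup>2"
proof -
  have "penalty (c x y) = 0"
    using assms by (simp add: penalty_eq_0_iff Theta_def)
  then show ?thesis by (simp add: psi_eq_penalty)
qed

lemma strongly_concave_maximizer_unique:
  fixes g :: "'a::real_inner \<Rightarrow> real" and \<sigma> :: real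
  defines "h \<equiv> \<lambda>w. g w - \<sigma> / 2 * (norm w)\<^sup>2"
  assumes "concave_on S g" "0 < \<sigma>" "y \<in> S" "z \<in> S"
    and "\<And>w. w \<in> S \<Longrightarrow> h w \<le> h y" "\<And>w. w \<in> S \<Longrightarrow> h w \<le> h z"
  shows "y = z"
proof (rule ccontr)
  assume "y \<noteq> z"
  define m where "m = (1 - 1/2) *\<^sub>R y + (1/2) *\<^sub>R z"
  have "m \<in> S"
    using convexD[OF concave_on_imp_convex[OF assms(2)] assms(4,5), of "1/2" "1/2"] by (simp add: m_def)
  have norm_m: "(norm m)\<^sup>2 = ((norm y)\<^sup>2 + (norm z)\<^sup>2) / 2 - (norm (y - z))\<^sup>2 / 4"
    by (simp add: m_def power2_norm_eq_inner inner_simps inner_commute field_simps)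
  have "(g y + g z) / 2 \<le> g m"
    using concave_onD[OF assms(2), of "1/2" y z] assms(4,5) by (simp add: m_def)
  moreover have "h m = g m - \<sigma> / 4 * ((norm y)\<^sup>2 + (norm z)\<^sup>2) + \<sigma> * (norm (y - z))\<^sup>2 / 8"
    unfolding h_def norm_m by (simp add: field_simps)
  moreover have "(h y + h z) / 2 = (g y + g z) / 2 - \<sigma> / 4 * ((norm y)\<^sup>2 + (norm z)\<^sup>2)"
    by (simp add: h_def field_simps)
  moreover have "0 < \<sigma> * (norm (y - z))\<^sup>2"
    using \<open>y \<noteq> z\<close> assms(3) by simp
  ultimately have "(h y + h z) / 2 < h m"
    by linarith
  moreover have "h y = h z"
    using assms(4-7) by (meson order_antisym)
  ultimately show False
    using assms(6)[OF \<open>m \<in> S\<close>] by simp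
qed

lemma continuous_on_Times_slice:
  assumes "continuous_on (A \<times> B) (\<lambda>z. g (fst z) (snd z))" "a \<in> A"
  shows "continuous_on B (g a)"
proof -
  have "continuous_on B (\<lambda>y. (\<lambda>z. g (fst z) (snd z)) (a, y))"
    by (rule continuous_on_compose2[OF assms(1)]) (auto intro!: continuous_intros simp: assms(2))
  then show ?thesis by simp
qed

lemma C11_on_imp_continuous_on: "C11_on g S \<Longrightarrow> continuous_on S g"
  unfolding C11_on_def
  by (metis continuous_at_imp_continuous_on has_derivative_continuous subsetD)

lemma lsc_on_le_of_eventually_le:
  fixes g :: "'a::topological_space \<Rightarrow> real"
  assumes "lsc_on X g" "a \<in> X" "u \<longlonglongrightarrow> a" "\<And>k. u k \<in> X"
    and "\<And>\<epsilon>. 0 < \<epsilon> \<Longrightarrow> eventually (\<lambda>k. g (u k) \<le> l + \<epsilon>) sequentially"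
  shows "g a \<le> l"
proof (rule ccontr)
  assume "\<not> g a \<le> l"
  define \<epsilon> where "\<epsilon> = (g a - l) / 2"
  have "0 < \<epsilon>" "l + \<epsilon> < g a"
    using \<open>\<not> g a \<le> l\<close> by (simp_all add: \<epsilon>_def field_simps)
  then have "eventually (\<lambda>z. z \<noteq> a \<longrightarrow> z \<in> X \<longrightarrow> l + \<epsilon> < g z) (nhds a)"
    using assms(1,2) by (simp add: lsc_on_def eventually_at_filter)
  then have "eventually (\<lambda>z. z \<in> X \<longrightarrow> l + \<epsilon> < g z) (nhds a)"
    by (rule eventually_mono) (use \<open>l + \<epsilon> < g a\<close> in auto)
  then have "eventually (\<lambda>k. l + \<epsilon> < g (u k)) sequentially"
    using assms(3,4) unfolding filterlim_iff by auto
  moreover have "eventually (\<lambda>k. g (u k) \<le> l + \<epsilon>) sequentially"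
    using assms(5)[OF \<open>0 < \<epsilon>\<close>] .
  ultimately have "eventually (\<lambda>k. False) sequentially"
    by eventually_elim simp
  then show False by simp
qed

(* Only continuity of f and c enters the argument. *)
locale penalized_minimax =
  fixes X :: "'x::metric_space set" and Y :: "'y::real_inner set"
    and f :: "'x \<Rightarrow> 'y \<Rightarrow> real" and c :: "'x \<Rightarrow> 'y \<Rightarrow> real^'p"
  assumes compact_X: "compact X" and compact_Y: "compact Y"
    and continuous_f: "continuous_on (X \<times> Y) (\<lambda>z. f (fst z) (snd z))"
    and continuous_c: "continuous_on (X \<times> Y) (\<lambda>z. c (fst z) (snd z))"
    and concave_f: "\<And>x. x \<in> X \<Longrightarrow> concave_on Y (f x)"
    and convex_c: "\<And>x i. x \<in> X \<Longrightarrow> convex_on Y (\<lambda>y. c x y $ i)"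
    and feasible: "\<And>x. x \<in> X \<Longrightarrow> Theta Y c x \<noteq> {}"
begin

lemma f_bounded:
  obtains M where "\<And>x y. x \<in> X \<Longrightarrow> y \<in> Y \<Longrightarrow> \<bar>f x y\<bar> \<le> M"
proof -
  have "bounded ((\<lambda>z. f (fst z) (snd z)) ` (X \<times> Y))"
    by (intro compact_imp_bounded compact_continuous_image continuous_f compact_Times compact_X compact_Y)
  then show ?thesis
    using that by (force simp: bounded_iff)
qed

lemma norm_sq_bounded:
  obtains B where "\<And>y. y \<in> Y \<Longrightarrow> (norm y)\<^sup>2 \<le> B"
proof -
  obtain b where "\<And>y. y \<in> Y \<Longrightarrow> norm y \<le> b"
    using compact_imp_bounded[OF compact_Y] by (auto simp: bounded_iff)
  then show ?thesis
    using that[of "b\<^sup>2"] by (meson norm_ge_zero power_mono)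
qed

lemma
  assumes "x \<in> X" "0 \<le> \<rho>" "0 < \<sigma>"
  shows ystar_in_Y: "ystar Y f c \<rho> \<sigma> x \<in> Y"
    and psi_le_psi_ystar: "y \<in> Y \<Longrightarrow> psi f c \<rho> \<sigma> x y \<le> psi f c \<rho> \<sigma> x (ystar Y f c \<rho> \<sigma> x)"
proof -
  let ?psi = "psi f c \<rho> \<sigma> x"
  have psi: "?psi = (\<lambda>y. (f x y - \<rho> / 2 * penalty (c x y)) - \<sigma> / 2 * (norm y)\<^sup>2)"
    by (simp add: fun_eq_iff psi_eq_penalty)
  have "continuous_on Y ?psi"
    unfolding psi using continuous_on_Times_slice[OF continuous_f assms(1)]
      continuous_on_Times_slice[OF continuous_c assms(1)]
    by (intro continuous_intros continuous_on_penalty)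
  moreover have "Y \<noteq> {}"
    using feasible[OF assms(1)] by (auto simp: Theta_def)
  ultimately obtain y0 where y0: "y0 \<in> Y" "\<forall>y\<in>Y. ?psi y \<le> ?psi y0"
    using continuous_attains_sup[OF compact_Y] by blast
  have "concave_on Y (\<lambda>y. f x y - \<rho> / 2 * penalty (c x y))"
    using assms by (intro concave_on_diff convex_on_cmul convex_on_penalty concave_f convex_c) auto
  then have "\<exists>!y. y \<in> Y \<and> (\<forall>y'\<in>Y. ?psi y' \<le> ?psi y)"
    using y0 strongly_concave_maximizer_unique[of Y _ \<sigma>] \<open>0 < \<sigma>\<close> unfolding psi by blast
  then have "ystar Y f c \<rho> \<sigma> x \<in> Y \<and> (\<forall>y'\<in>Y. ?psi y' \<le> ?psi (ystar Y f c \<rho> \<sigma> x))"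
    unfolding ystar_def by (rule theI')
  then show "ystar Y f c \<rho> \<sigma> x \<in> Y" "y \<in> Y \<Longrightarrow> ?psi y \<le> ?psi (ystar Y f c \<rho> \<sigma> x)"
    by auto
qed

lemma phi_pen_eq_psi_ystar:
  assumes "x \<in> X" "0 \<le> \<rho>" "0 < \<sigma>"
  shows "phi_pen Y f c \<rho> \<sigma> x = psi f c \<rho> \<sigma> x (ystar Y f c \<rho> \<sigma> x)"
  unfolding phi_pen_def
  by (rule cSup_eq_maximum) (use ystar_in_Y[OF assms] psi_le_psi_ystar[OF assms] in auto)

lemma phi_pen_le_f_ystar:
  assumes "x \<in> X" "0 \<le> \<rho>" "0 < \<sigma>"
  shows "phi_pen Y f c \<rho> \<sigma> x \<le> f x (ystar Y f c \<rho> \<sigma> x)"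
proof -
  have "0 \<le> \<rho> / 2 * penalty (c x (ystar Y f c \<rho> \<sigma> x))"
    using assms(2) penalty_nonneg by (intro mult_nonneg_nonneg) auto
  then show ?thesis
    unfolding phi_pen_eq_psi_ystar[OF assms]
    using psi_le_f_minus_penalty[of \<rho> \<sigma> f c x "ystar Y f c \<rho> \<sigma> x"] assms(2,3) by linarith
qed

lemma f_le_phi:
  assumes "x \<in> X" "y \<in> Theta Y c x"
  shows "f x y \<le> phi Y f c x"
proof -
  obtain M where "\<And>y. y \<in> Y \<Longrightarrow> \<bar>f x y\<bar> \<le> M"
    using f_bounded assms(1) by metis
  then have "bdd_above (f x ` Theta Y c x)"
    by (intro bdd_aboveI2[of _ _ M]) (auto simp: Theta_def abs_le_iff)
  then show ?thesis
    unfolding phi_def using assms(2) by (intro cSup_upper) auto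
qed

lemma phi_le_phi_pen:
  assumes "x \<in> X" "0 \<le> \<rho>" "0 < \<sigma>" and B: "\<And>y. y \<in> Y \<Longrightarrow> (norm y)\<^sup>2 \<le> B"
  shows "phi Y f c x \<le> phi_pen Y f c \<rho> \<sigma> x + \<sigma> / 2 * B"
  unfolding phi_def
proof (rule cSup_least)
  show "f x ` Theta Y c x \<noteq> {}"
    using feasible[OF assms(1)] by blast
  fix v assume "v \<in> f x ` Theta Y c x"
  then obtain y where y: "y \<in> Theta Y c x" "v = f x y" by blast
  then have "y \<in> Y" by (simp add: Theta_def)
  have "v = psi f c \<rho> \<sigma> x y + \<sigma> / 2 * (norm y)\<^sup>2"
    using y by (simp add: psi_feasible)
  also have "\<dots> \<le> phi_pen Y f c \<rho> \<sigma> x + \<sigma> / 2 * B"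
    using psi_le_psi_ystar[OF assms(1-3) \<open>y \<in> Y\<close>] B[OF \<open>y \<in> Y\<close>] \<open>0 < \<sigma>\<close>
    by (intro add_mono mult_left_mono) (auto simp: phi_pen_eq_psi_ystar[OF assms(1-3)])
  finally show "v \<le> phi_pen Y f c \<rho> \<sigma> x + \<sigma> / 2 * B" .
qed

lemma penalty_ystar_le:
  assumes "x \<in> X" "0 < \<rho>" "0 < \<sigma>"
    and M: "\<And>y. y \<in> Y \<Longrightarrow> \<bar>f x y\<bar> \<le> M" and B: "\<And>y. y \<in> Y \<Longrightarrow> (norm y)\<^sup>2 \<le> B"
  shows "penalty (c x (ystar Y f c \<rho> \<sigma> x)) \<le> (4 * M + \<sigma> * B) / \<rho>"
proof -
  let ?y = "ystar Y f c \<rho> \<sigma> x"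
  have params: "x \<in> X" "0 \<le> \<rho>" "0 < \<sigma>"
    using assms(1-3) by auto
  obtain y0 where y0: "y0 \<in> Theta Y c x"
    using feasible[OF assms(1)] by blast
  then have "y0 \<in> Y" by (simp add: Theta_def)
  have "- M - \<sigma> / 2 * B \<le> f x y0 - \<sigma> / 2 * (norm y0)\<^sup>2"
    using M[OF \<open>y0 \<in> Y\<close>] B[OF \<open>y0 \<in> Y\<close>] \<open>0 < \<sigma>\<close>
    by (smt (verit) half_gt_zero mult_left_mono)
  also have "\<dots> = psi f c \<rho> \<sigma> x y0"
    using y0 by (simp add: psi_feasible)
  also have "\<dots> \<le> psi f c \<rho> \<sigma> x ?y"
    by (rule psi_le_psi_ystar[OF params \<open>y0 \<in> Y\<close>])
  also have "\<dots> \<le> M - \<rho> / 2 * penalty (c x ?y)"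
    using psi_le_f_minus_penalty[of \<rho> \<sigma> f c x ?y] M[OF ystar_in_Y[OF params]] params by fastforce
  finally have "\<rho> * penalty (c x ?y) \<le> 4 * M + \<sigma> * B"
    by (simp add: field_simps)
  then show ?thesis
    using \<open>0 < \<rho>\<close> by (simp add: pos_le_divide_eq mult.commute)
qed

lemma penalty_bounded_below_on_superlevel:
  assumes "x \<in> X" "0 < \<epsilon>"
  obtains d where "0 < d" "\<And>y. y \<in> Y \<Longrightarrow> phi Y f c x + \<epsilon> \<le> f x y \<Longrightarrow> d \<le> penalty (c x y)"
proof -
  define K where "K = Y \<inter> f x -` {phi Y f c x + \<epsilon>..}"
  have "closed K"
    unfolding K_def using continuous_on_Times_slice[OF continuous_f assms(1)]
    by (intro continuous_closed_preimage compact_imp_closed compact_Y closed_atLeast)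
  then have "compact K"
    using compact_Int_closed[OF compact_Y] by (metis K_def Int_absorb inf_assoc)
  show ?thesis
  proof (cases "K = {}")
    case True
    then show ?thesis
      using that[of 1] by (auto simp: K_def)
  next
    case False
    have "continuous_on K (\<lambda>y. penalty (c x y))"
      using continuous_on_Times_slice[OF continuous_c assms(1)]
      by (intro continuous_on_penalty) (auto intro: continuous_on_subset simp: K_def)
    then obtain y0 where y0: "y0 \<in> K" "\<And>y. y \<in> K \<Longrightarrow> penalty (c x y0) \<le> penalty (c x y)"
      using continuous_attains_inf[OF \<open>compact K\<close> False] by blast
    have "penalty (c x y0) \<noteq> 0"
    proof
      assume "penalty (c x y0) = 0"
      then have "y0 \<in> Theta Y c x"
        using y0(1) by (simp add: Theta_def K_def penalty_eq_0_iff)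
      then show False
        using f_le_phi[OF assms(1)] y0(1) assms(2) by (fastforce simp: K_def)
    qed
    show ?thesis
    proof (rule that)
      show "0 < penalty (c x y0)"
        using \<open>penalty (c x y0) \<noteq> 0\<close> penalty_nonneg[of "c x y0"] by linarith
      show "penalty (c x y0) \<le> penalty (c x y)" if "y \<in> Y" "phi Y f c x + \<epsilon> \<le> f x y" for y
        using y0(2) that by (simp add: K_def)
    qed
  qed
qed

lemma eventually_phi_pen_le_phi:
  assumes "x \<in> X" "0 < \<epsilon>" "filterlim \<rho> at_top sequentially" "\<And>k. 0 \<le> \<sigma> k"
  shows "eventually (\<lambda>k. phi_pen Y f c (\<rho> k) (\<sigma> k) x \<le> phi Y f c x + \<epsilon>) sequentially"
proof -
  let ?p = "phi Y f c x"
  obtain d where d: "0 < d" "\<And>y. y \<in> Y \<Longrightarrow> ?p + \<epsilon> \<le> f x y \<Longrightarrow> d \<le> penalty (c x y)"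
    using penalty_bounded_below_on_superlevel[OF assms(1,2)] by blast
  obtain M where M: "\<And>y. y \<in> Y \<Longrightarrow> f x y \<le> M"
    using f_bounded assms(1) by (metis abs_le_D1)
  have "eventually (\<lambda>k. max 0 (2 * (M - ?p) / d) \<le> \<rho> k) sequentially"
    using assms(3) unfolding filterlim_at_top by (rule spec)
  then show ?thesis
  proof (rule eventually_mono)
    fix k assume "max 0 (2 * (M - ?p) / d) \<le> \<rho> k"
    then have "0 \<le> \<rho> k" "M - ?p \<le> \<rho> k / 2 * d"
      using \<open>0 < d\<close> by (auto simp: pos_divide_le_eq)
    have "psi f c (\<rho> k) (\<sigma> k) x y \<le> ?p + \<epsilon>" if "y \<in> Y" for y
    proof -
      have psi: "psi f c (\<rho> k) (\<sigma> k) x y \<le> f x y - \<rho> k / 2 * penalty (c x y)"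
        using psi_le_f_minus_penalty[OF \<open>0 \<le> \<rho> k\<close> assms(4)] .
      show ?thesis
      proof (cases "?p + \<epsilon> \<le> f x y")
        case True
        then have "\<rho> k / 2 * d \<le> \<rho> k / 2 * penalty (c x y)"
          using d(2)[OF that] \<open>0 \<le> \<rho> k\<close> by (intro mult_left_mono) auto
        then show ?thesis
          using psi M[OF that] \<open>M - ?p \<le> \<rho> k / 2 * d\<close> assms(2) by linarith
      next
        case False
        have "0 \<le> \<rho> k / 2 * penalty (c x y)"
          using \<open>0 \<le> \<rho> k\<close> penalty_nonneg by (intro mult_nonneg_nonneg) auto
        then show ?thesis
          using psi False by linarith
      qed
    qed
    moreover have "Y \<noteq> {}"
      using feasible[OF assms(1)] by (auto simp: Theta_def)
    ultimately show "phi_pen Y f c (\<rho> k) (\<sigma> k) x \<le> ?p + \<epsilon>"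
      unfolding phi_pen_def by (intro cSup_least) auto
  qed
qed

theorem limit_of_minimizers_minimizes_phi:
  assumes lsc: "lsc_on X (phi Y f c)"
    and \<rho>: "\<And>k. 0 \<le> \<rho> k" "filterlim \<rho> at_top sequentially"
    and \<sigma>: "\<And>k. 0 < \<sigma> k" "\<sigma> \<longlonglongrightarrow> 0"
    and x_in: "\<And>k. x k \<in> X"
    and x_min: "\<And>k x'. x' \<in> X \<Longrightarrow> phi_pen Y f c (\<rho> k) (\<sigma> k) (x k) \<le> phi_pen Y f c (\<rho> k) (\<sigma> k) x'"
    and x_lim: "x \<longlonglongrightarrow> xb"
  shows "xb \<in> X \<and> (\<forall>x'\<in>X. phi Y f c xb \<le> phi Y f c x')"
proof (intro conjI ballI)
  show "xb \<in> X"
    using closed_sequentially[OF compact_imp_closed[OF compact_X] _ x_lim] x_in by blast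
  obtain B where B: "\<And>y. y \<in> Y \<Longrightarrow> (norm y)\<^sup>2 \<le> B"
    using norm_sq_bounded by blast
  fix x' assume "x' \<in> X"
  show "phi Y f c xb \<le> phi Y f c x'"
  proof (rule lsc_on_le_of_eventually_le[OF lsc \<open>xb \<in> X\<close> x_lim x_in])
    fix \<epsilon> :: real assume "0 < \<epsilon>"
    have "(\<lambda>k. \<sigma> k / 2 * B) \<longlonglongrightarrow> 0 / 2 * B"
      by (intro tendsto_intros \<sigma>(2)) simp
    then have "eventually (\<lambda>k. \<sigma> k / 2 * B < \<epsilon> / 2) sequentially"
      using \<open>0 < \<epsilon>\<close> by (simp add: order_tendstoD(2))
    moreover have "eventually (\<lambda>k. phi_pen Y f c (\<rho> k) (\<sigma> k) x' \<le> phi Y f c x' + \<epsilon> / 2) sequentially"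
      using eventually_phi_pen_le_phi[OF \<open>x' \<in> X\<close> half_gt_zero[OF \<open>0 < \<epsilon>\<close>] \<rho>(2) less_imp_le[OF \<sigma>(1)]] .
    ultimately show "eventually (\<lambda>k. phi Y f c (x k) \<le> phi Y f c x' + \<epsilon>) sequentially"
    proof eventually_elim
      case (elim k)
      have "phi Y f c (x k) \<le> phi_pen Y f c (\<rho> k) (\<sigma> k) (x k) + \<sigma> k / 2 * B"
        using phi_le_phi_pen[OF x_in \<rho>(1) \<sigma>(1) B] .
      also have "\<dots> \<le> phi_pen Y f c (\<rho> k) (\<sigma> k) x' + \<sigma> k / 2 * B"
        using x_min[OF \<open>x' \<in> X\<close>] by simp
      finally show ?case
        using elim by linarith
    qed
  qed
qed

lemma tendsto_ystar_pair:
  assumes "\<And>k. 0 \<le> \<rho> k" "\<And>k. 0 < \<sigma> k" "\<And>k. u k \<in> X" "u \<longlonglongrightarrow> xb"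
    and "(\<lambda>k. ystar Y f c (\<rho> k) (\<sigma> k) (u k)) \<longlonglongrightarrow> yb"
  shows "xb \<in> X" "yb \<in> Y" "\<And>k. (u k, ystar Y f c (\<rho> k) (\<sigma> k) (u k)) \<in> X \<times> Y"
    and "(\<lambda>k. (u k, ystar Y f c (\<rho> k) (\<sigma> k) (u k))) \<longlonglongrightarrow> (xb, yb)"
proof -
  show in_XY: "(u k, ystar Y f c (\<rho> k) (\<sigma> k) (u k)) \<in> X \<times> Y" for k
    using ystar_in_Y assms(1-3) by blast
  show "xb \<in> X"
    using closed_sequentially[OF compact_imp_closed[OF compact_X] _ assms(4)] assms(3) by blast
  show "yb \<in> Y"
    using closed_sequentially[OF compact_imp_closed[OF compact_Y] _ assms(5)] in_XY by blast
  show "(\<lambda>k. (u k, ystar Y f c (\<rho> k) (\<sigma> k) (u k))) \<longlonglongrightarrow> (xb, yb)"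
    using assms(4,5) by (rule tendsto_Pair)
qed

theorem ystar_limit_feasible:
  assumes \<rho>: "\<And>k. 0 < \<rho> k" "filterlim \<rho> at_top sequentially"
    and \<sigma>: "\<And>k. 0 < \<sigma> k" "\<sigma> \<longlonglongrightarrow> 0"
    and u: "\<And>k. u k \<in> X" "u \<longlonglongrightarrow> xb"
    and y_lim: "(\<lambda>k. ystar Y f c (\<rho> k) (\<sigma> k) (u k)) \<longlonglongrightarrow> yb"
  shows "yb \<in> Theta Y c xb"
proof -
  let ?y = "\<lambda>k. ystar Y f c (\<rho> k) (\<sigma> k) (u k)"
  note lim = tendsto_ystar_pair[OF less_imp_le[OF \<rho>(1)] \<sigma>(1) u y_lim]
  obtain M where M: "\<And>x y. x \<in> X \<Longrightarrow> y \<in> Y \<Longrightarrow> \<bar>f x y\<bar> \<le> M"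
    using f_bounded by blast
  obtain B where B: "\<And>y. y \<in> Y \<Longrightarrow> (norm y)\<^sup>2 \<le> B"
    using norm_sq_bounded by blast
  have penalty_lim: "(\<lambda>k. penalty (c (u k) (?y k))) \<longlonglongrightarrow> penalty (c xb yb)"
    using continuous_on_tendsto_compose[OF continuous_on_penalty[OF continuous_c] lim(4)] lim(1-3)
    by simp
  have "(\<lambda>k. 4 * M + \<sigma> k * B) \<longlonglongrightarrow> 4 * M + 0 * B"
    by (intro tendsto_intros \<sigma>(2))
  then have bound_lim: "(\<lambda>k. (4 * M + \<sigma> k * B) / \<rho> k) \<longlonglongrightarrow> 0"
    using filterlim_at_top_imp_at_infinity[OF \<rho>(2)] by (rule tendsto_divide_0)
  have "penalty (c (u k) (?y k)) \<le> (4 * M + \<sigma> k * B) / \<rho> k" for k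
    using penalty_ystar_le[OF u(1) \<rho>(1) \<sigma>(1) M[OF u(1)] B] .
  then have "penalty (c xb yb) \<le> 0"
    using tendsto_le[OF trivial_limit_sequentially bound_lim penalty_lim] by simp
  then have "penalty (c xb yb) = 0"
    using penalty_nonneg antisym by blast
  then show ?thesis
    using lim(2) by (simp add: Theta_def penalty_eq_0_iff)
qed

theorem phi_le_f_ystar_limit:
  assumes lsc: "lsc_on X (phi Y f c)"
    and \<rho>: "\<And>k. 0 \<le> \<rho> k"
    and \<sigma>: "\<And>k. 0 < \<sigma> k" "\<sigma> \<longlonglongrightarrow> 0"
    and u: "\<And>k. u k \<in> X" "u \<longlonglongrightarrow> xb"
    and y_lim: "(\<lambda>k. ystar Y f c (\<rho> k) (\<sigma> k) (u k)) \<longlonglongrightarrow> yb"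
  shows "phi Y f c xb \<le> f xb yb"
proof -
  let ?y = "\<lambda>k. ystar Y f c (\<rho> k) (\<sigma> k) (u k)"
  note lim = tendsto_ystar_pair[OF \<rho> \<sigma>(1) u y_lim]
  obtain B where B: "\<And>y. y \<in> Y \<Longrightarrow> (norm y)\<^sup>2 \<le> B"
    using norm_sq_bounded by blast
  show ?thesis
  proof (rule lsc_on_le_of_eventually_le[OF lsc lim(1) u(2) u(1)])
    fix \<epsilon> :: real assume "0 < \<epsilon>"
    have "(\<lambda>k. f (u k) (?y k)) \<longlonglongrightarrow> f xb yb"
      using continuous_on_tendsto_compose[OF continuous_f lim(4)] lim(1-3) by simp
    then have "(\<lambda>k. f (u k) (?y k) + \<sigma> k / 2 * B) \<longlonglongrightarrow> f xb yb + 0 / 2 * B"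
      by (intro tendsto_intros \<sigma>(2)) simp_all
    then have "eventually (\<lambda>k. f (u k) (?y k) + \<sigma> k / 2 * B < f xb yb + \<epsilon>) sequentially"
      using \<open>0 < \<epsilon>\<close> by (simp add: order_tendstoD(2))
    then show "eventually (\<lambda>k. phi Y f c (u k) \<le> f xb yb + \<epsilon>) sequentially"
    proof (rule eventually_mono)
      fix k assume "f (u k) (?y k) + \<sigma> k / 2 * B < f xb yb + \<epsilon>"
      moreover have "phi Y f c (u k) \<le> phi_pen Y f c (\<rho> k) (\<sigma> k) (u k) + \<sigma> k / 2 * B"
        using phi_le_phi_pen[OF u(1) \<rho> \<sigma>(1) B] .
      moreover have "phi_pen Y f c (\<rho> k) (\<sigma> k) (u k) \<le> f (u k) (?y k)"
        using phi_pen_le_f_ystar[OF u(1) \<rho> \<sigma>(1)] .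
      ultimately show "phi Y f c (u k) \<le> f xb yb + \<epsilon>"
        by linarith
    qed
  qed
qed

corollary ystar_limit_in_argmax:
  assumes lsc: "lsc_on X (phi Y f c)"
    and \<rho>: "\<And>k. 0 < \<rho> k" "filterlim \<rho> at_top sequentially"
    and \<sigma>: "\<And>k. 0 < \<sigma> k" "\<sigma> \<longlonglongrightarrow> 0"
    and u: "\<And>k. u k \<in> X" "u \<longlonglongrightarrow> xb"
    and y_lim: "(\<lambda>k. ystar Y f c (\<rho> k) (\<sigma> k) (u k)) \<longlonglongrightarrow> yb"
  shows "yb \<in> Y \<and> (\<forall>i. c xb yb $ i \<le> 0) \<and> (\<forall>y\<in>Y. (\<forall>i. c xb y $ i \<le> 0) \<longrightarrow> f xb y \<le> f xb yb)"
proof -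
  have "yb \<in> Theta Y c xb"
    using ystar_limit_feasible[OF \<rho> \<sigma> u y_lim] .
  moreover have "phi Y f c xb \<le> f xb yb"
    using phi_le_f_ystar_limit[OF lsc less_imp_le[OF \<rho>(1)] \<sigma> u y_lim] .
  moreover have "xb \<in> X"
    using tendsto_ystar_pair(1)[OF less_imp_le[OF \<rho>(1)] \<sigma>(1) u y_lim] .
  ultimately show ?thesis
    using f_le_phi by (fastforce simp: Theta_def)
qed

end

theorem theorem2p4:
  fixes X :: "(real^'n) set" and Y :: "(real^'m) set"
    and f :: "real^'n \<Rightarrow> real^'m \<Rightarrow> real"
    and c :: "real^'n \<Rightarrow> real^'m \<Rightarrow> real^'p"
    and \<rho> \<sigma> :: "nat \<Rightarrow> real" and x :: "nat \<Rightarrow> real^'n"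
  assumes X: "X \<noteq> {}" "convex X" "compact X"
    and Y: "Y \<noteq> {}" "convex Y" "compact Y"
    and f_smooth: "C11_on (\<lambda>z. f (fst z) (snd z)) (X \<times> Y)"
    and f_concave: "\<forall>x\<in>X. concave_on Y (f x)"
    and c_smooth: "\<forall>i. C11_on (\<lambda>z. c (fst z) (snd z) $ i) (X \<times> Y)"
    and c_convex: "\<forall>x\<in>X. \<forall>i. convex_on Y (\<lambda>y. c x y $ i)"
    and feasible: "\<forall>x\<in>X. Theta Y c x \<noteq> {}"
    and lsc: "lsc_on X (phi Y f c)"
    and rho_pos: "\<forall>k. \<rho> k > 0" and rho_lim: "filterlim \<rho> at_top sequentially"
    and sigma_pos: "\<forall>k. \<sigma> k > 0" and sigma_lim: "\<sigma> \<longlonglongrightarrow> 0"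
    and x_argmin: "\<forall>k. x k \<in> X \<and> (\<forall>x'\<in>X. phi_pen Y f c (\<rho> k) (\<sigma> k) (x k) \<le> phi_pen Y f c (\<rho> k) (\<sigma> k) x')"
  shows "(\<forall>xbar r. strict_mono r \<and> (x \<circ> r) \<longlonglongrightarrow> xbar \<longrightarrow>
            xbar \<in> X \<and> (\<forall>x'\<in>X. phi Y f c xbar \<le> phi Y f c x'))
       \<and> (\<forall>xbar r. strict_mono r \<and> (x \<circ> r) \<longlonglongrightarrow> xbar \<longrightarrow>
            (\<forall>ybar s. strict_mono s \<and>
               ((\<lambda>j. ystar Y f c (\<rho> (r j)) (\<sigma> (r j)) (x (r j))) \<circ> s) \<longlonglongrightarrow> ybar \<longrightarrow>
               ybar \<in> Y \<and> (\<forall>i. c xbar ybar $ i \<le> 0) \<and>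
               (\<forall>y\<in>Y. (\<forall>i. c xbar y $ i \<le> 0) \<longrightarrow> f xbar y \<le> f xbar ybar)))"
proof -
  have "continuous_on (X \<times> Y) (\<lambda>z. \<chi> i. c (fst z) (snd z) $ i)"
    using c_smooth by (intro continuous_on_vec_lambda C11_on_imp_continuous_on) blast
  then interpret penalized_minimax X Y f c
    using X(3) Y(3) C11_on_imp_continuous_on[OF f_smooth] f_concave c_convex feasible
    by unfold_locales (auto simp: vec_lambda_eta)
  have \<rho>\<sigma>_subseq: "filterlim (\<rho> \<circ> q) at_top sequentially" "(\<sigma> \<circ> q) \<longlonglongrightarrow> 0"
    if "strict_mono q" for q
    using filterlim_compose[OF rho_lim filterlim_subseq[OF that]] LIMSEQ_subseq_LIMSEQ[OF sigma_lim that]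
    by (simp_all add: comp_def)
  have minimizes: "xbar \<in> X \<and> (\<forall>x'\<in>X. phi Y f c xbar \<le> phi Y f c x')"
    if "strict_mono r" "(x \<circ> r) \<longlonglongrightarrow> xbar" for xbar r
    using limit_of_minimizers_minimizes_phi[OF lsc _ \<rho>\<sigma>_subseq(1)[OF that(1)] _ \<rho>\<sigma>_subseq(2)[OF that(1)]
        _ _ that(2)] rho_pos sigma_pos x_argmin by (simp add: less_imp_le)
  have solves_inner: "ybar \<in> Y \<and> (\<forall>i. c xbar ybar $ i \<le> 0) \<and>
      (\<forall>y\<in>Y. (\<forall>i. c xbar y $ i \<le> 0) \<longrightarrow> f xbar y \<le> f xbar ybar)"
    if r: "strict_mono r" "(x \<circ> r) \<longlonglongrightarrow> xbar"
      and s: "strict_mono s" "((\<lambda>j. ystar Y f c (\<rho> (r j)) (\<sigma> (r j)) (x (r j))) \<circ> s) \<longlonglongrightarrow> ybar"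
    for xbar r ybar s
  proof -
    have q: "strict_mono (r \<circ> s)"
      using r(1) s(1) by (simp add: strict_mono_def)
    have x_lim: "(x \<circ> (r \<circ> s)) \<longlonglongrightarrow> xbar"
      using LIMSEQ_subseq_LIMSEQ[OF r(2) s(1)] by (simp add: o_assoc)
    have y_lim: "(\<lambda>k. ystar Y f c ((\<rho> \<circ> (r \<circ> s)) k) ((\<sigma> \<circ> (r \<circ> s)) k) ((x \<circ> (r \<circ> s)) k)) \<longlonglongrightarrow> ybar"
      using s(2) by (simp add: comp_def)
    show ?thesis
      using ystar_limit_in_argmax[OF lsc _ \<rho>\<sigma>_subseq(1)[OF q] _ \<rho>\<sigma>_subseq(2)[OF q] _ x_lim y_lim]
        rho_pos sigma_pos x_argmin by simp
  qed
  show ?thesis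
    using minimizes solves_inner by blast
qed

end
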